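(* For $n\ge1$ and $k\ge1$, let $\overline{\sigma}^k_n=(\sigma^k_n,n)$ be the sequence $\sigma^k_n$ followed by one additional term $n$ (this sequence has $k^nn!$ terms), and let $\mathrm{avg}(n,k)$ be the arithmetic mean of its terms. Then $$\mathrm{avg}(n,k)=\sum_{j=0}^{n-1}\frac{1}{k^j\,j!},$$ and consequently $\mathrm{avg}(n,k)<e^{1/k}$.
   Context: The sequence $\sigma^k_n$ of positive integers is defined recursively by $\sigma^k_1=1^{k-1}$ (the value $1$ repeated $k-1$ times; empty if $k=1$) and, for $n>1$, $\sigma^k_n=(\sigma^k_{n-1},n)^{kn-1},\sigma^k_{n-1}$, i.e. $kn-1$ copies of the block "$\sigma^k_{n-1}$ followed by $n$", followed by one more copy of $\sigma^k_{n-1}$. *)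

theory Defs
  imports "HOL-Analysis.Analysis"
begin

text \<open>The sequence sigma^k_n as a list of positive integers (defined for n \<ge> 1;
  the value at n = 0 is an irrelevant placeholder).\<close>
fun sigma :: "nat \<Rightarrow> nat \<Rightarrow> nat list" where
  "sigma k 0 = []"
| "sigma k (Suc 0) = replicate (k - 1) 1"
| "sigma k (Suc (Suc m)) =
     concat (replicate (k * Suc (Suc m) - 1) (sigma k (Suc m) @ [Suc (Suc m)])) @ sigma k (Suc m)"

definition sigma_bar :: "nat \<Rightarrow> nat \<Rightarrow> nat list" where
  "sigma_bar k n = sigma k n @ [n]"

definition avg :: "nat \<Rightarrow> nat \<Rightarrow> real" where
  "avg n k = real (sum_list (sigma_bar k n)) / real (length (sigma_bar k n))"

end

theory Submission
  imports Defs
begin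

text \<open>Appending the term \<open>n + 1\<close> to \<open>sigma k (n + 1)\<close> completes its last block, so
  \<open>sigma_bar k (n + 1)\<close> consists of \<open>k (n + 1)\<close> copies of \<open>sigma k n @ [n + 1]\<close>, whose
  total exceeds that of \<open>sigma_bar k n\<close> by one. Hence length and total are both multiplied by
  \<open>k (n + 1)\<close>, except for the extra \<open>k (n + 1)\<close> in the total, and the mean grows by exactly
  \<open>1 / (k\<^sup>n n!)\<close>. Summing these increments gives the partial sums of the exponential
  series at \<open>1 / k\<close>, which stay below \<open>exp (1 / k)\<close>.\<close>

lemma sum_list_concat_replicate:
  fixes xs :: "'a::comm_semiring_1 list"
  shows "sum_list (concat (replicate c xs)) = of_nat c * sum_list xs"
  by (induction c) (simp_all add: algebra_simps)

lemma sigma_bar_Suc: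
  assumes "n \<ge> 1" and "k \<ge> 1"
  shows "sigma_bar k (Suc n) = concat (replicate (k * Suc n) (sigma k n @ [Suc n]))"
proof -
  obtain m where n: "n = Suc m" using assms(1) by (cases n) auto
  define block where "block = sigma k n @ [Suc n]"
  have "sigma_bar k (Suc n) = concat (replicate (k * Suc n - 1) block) @ block"
    by (simp add: sigma_bar_def block_def n)
  also have "\<dots> = concat (replicate (k * Suc n - 1) block @ [block])" by simp
  also have "\<dots> = concat (replicate (k * Suc n) block)"
    using assms(2) by (simp add: replicate_append_same flip: replicate_Suc)
  finally show ?thesis unfolding block_def .
qed

lemma length_sigma_bar_Suc:
  assumes "n \<ge> 1" and "k \<ge> 1"
  shows "length (sigma_bar k (Suc n)) = k * Suc n * length (sigma_bar k n)"
  using assms by (simp add: sigma_bar_Suc length_concat sum_list_replicate) (simp add: sigma_bar_def)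

lemma sum_sigma_bar_Suc:
  assumes "n \<ge> 1" and "k \<ge> 1"
  shows "sum_list (sigma_bar k (Suc n)) = k * Suc n * (sum_list (sigma_bar k n) + 1)"
  using assms by (simp add: sigma_bar_Suc sum_list_concat_replicate) (simp add: sigma_bar_def)

lemma length_sigma_bar:
  assumes "n \<ge> 1" and "k \<ge> 1"
  shows "length (sigma_bar k n) = k ^ n * fact n"
  using assms(1)
proof (induction n rule: nat_induct_at_least)
  case base
  then show ?case using assms(2) by (simp add: sigma_bar_def)
next
  case (Suc n)
  then show ?case by (simp add: length_sigma_bar_Suc[OF Suc.hyps(1) assms(2)] algebra_simps)
qed

lemma avg_Suc:
  assumes "n \<ge> 1" and "k \<ge> 1"
  shows "avg (Suc n) k = avg n k + 1 / (real k ^ n * fact n)"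
proof -
  define S where "S = real (sum_list (sigma_bar k n))"
  have L: "real (length (sigma_bar k n)) = real k ^ n * fact n"
    using length_sigma_bar[OF assms] by simp
  have "avg (Suc n) k = real k * Suc n * (S + 1) / (real k * Suc n * (real k ^ n * fact n))"
    unfolding avg_def S_def sum_sigma_bar_Suc[OF assms]
    using length_sigma_bar[of "Suc n" k] assms by (simp add: algebra_simps)
  also have "\<dots> = (S + 1) / (real k ^ n * fact n)"
    using assms by simp
  also have "\<dots> = avg n k + 1 / (real k ^ n * fact n)"
    unfolding avg_def S_def L by (simp add: add_divide_distrib)
  finally show ?thesis .
qed

lemma avg_eq_exp_partial_sum:
  assumes "n \<ge> 1" and "k \<ge> 1"
  shows "avg n k = (\<Sum>j<n. 1 / (real k ^ j * fact j))"
  using assms(1)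
proof (induction n rule: nat_induct_at_least)
  case base
  then show ?case using assms(2) by (simp add: avg_def sigma_bar_def sum_list_replicate of_nat_diff)
next
  case (Suc n)
  then show ?case by (simp add: avg_Suc[OF Suc.hyps assms(2)])
qed

lemma exp_partial_sum_less:
  fixes x :: real
  assumes "x > 0"
  shows "(\<Sum>j<n. x ^ j / fact j) < exp x"
proof -
  have "(\<Sum>j<n. x ^ j / fact j) < (\<Sum>j. x ^ j / fact j)"
  proof (rule sum_less_suminf)
    show "summable (\<lambda>j. x ^ j / fact j)"
      using summable_exp[of x] by (simp add: divide_inverse mult.commute)
  qed (use assms in auto)
  also have "\<dots> = exp x" by (simp add: exp_def divide_inverse mult.commute)
  finally show ?thesis .
qed

theorem lemma8:
  fixes n k :: nat
  assumes "n \<ge> 1" and "k \<ge> 1"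
  shows "length (sigma_bar k n) = k ^ n * fact n
         \<and> avg n k = (\<Sum>j<n. 1 / (real k ^ j * fact j))
         \<and> avg n k < exp (1 / real k)"
proof -
  have "(\<Sum>j<n. 1 / (real k ^ j * fact j)) = (\<Sum>j<n. (1 / real k) ^ j / fact j)"
    by (simp add: power_one_over)
  also have "\<dots> < exp (1 / real k)"
    using assms(2) by (intro exp_partial_sum_less) simp
  finally show ?thesis
    using length_sigma_bar[OF assms] avg_eq_exp_partial_sum[OF assms] by simp
qed

end
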